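(* Let $V$ be a finite-dimensional real vector space and $F\in\Lambda^4V^*$ a 4-form such that for all $X,Y\in V$: $\iota_XF\wedge F=0$ and $\iota_XF\wedge\iota_YF=0$. Then $\iota_Z\iota_Y\iota_XF\wedge F=0$ for all $X,Y,Z\in V$, and consequently $F$ is decomposable, i.e. $F=\theta_1\wedge\theta_2\wedge\theta_3\wedge\theta_4$ for some $\theta_i\in V^*$.
   Context: $\iota_X$ denotes interior multiplication (contraction) by the vector $X$. A $p$-form is decomposable if it is a wedge product of $p$ one-forms. *)

theory Defs
  imports "HOL-Analysis.Analysis"
begin

text \<open>A p-form is represented as a function on sequences of vectors (nat => 'a) => real
that depends only on the first p arguments, is linear in each of them and alternating.\<close>


definition is_pform :: "nat \<Rightarrow> ((nat \<Rightarrow> 'a::euclidean_space) \<Rightarrow> real) \<Rightarrow> bool" where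
  "is_pform p F \<longleftrightarrow>
     (\<forall>v w. (\<forall>i<p. v i = w i) \<longrightarrow> F v = F w) \<and>
     (\<forall>i<p. \<forall>v. linear (\<lambda>x. F (v(i := x)))) \<and>
     (\<forall>v i j. i < p \<longrightarrow> j < p \<longrightarrow> i \<noteq> j \<longrightarrow> v i = v j \<longrightarrow> F v = 0)"

definition wedge :: "nat \<Rightarrow> nat \<Rightarrow> ((nat \<Rightarrow> 'a) \<Rightarrow> real) \<Rightarrow> ((nat \<Rightarrow> 'a) \<Rightarrow> real)
                      \<Rightarrow> (nat \<Rightarrow> 'a) \<Rightarrow> real" where
  "wedge p q \<alpha> \<beta> = (\<lambda>v. (\<Sum>\<sigma>\<in>{\<sigma>. \<sigma> permutes {..<p+q}}.
        real_of_int (sign \<sigma>) * \<alpha> (\<lambda>i. v (\<sigma> i)) * \<beta> (\<lambda>i. v (\<sigma> (i + p))))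
      / (fact p * fact q))"

definition contract :: "'a \<Rightarrow> ((nat \<Rightarrow> 'a) \<Rightarrow> real) \<Rightarrow> (nat \<Rightarrow> 'a) \<Rightarrow> real" where
  "contract X F = (\<lambda>v. F (\<lambda>i. if i = 0 then X else v (i - 1)))"

definition one_form :: "('a \<Rightarrow> real) \<Rightarrow> (nat \<Rightarrow> 'a) \<Rightarrow> real" where
  "one_form \<theta> = (\<lambda>v. \<theta> (v 0))"

end

theory Submission
  imports Defs
begin

text \<open>Contracting \<open>\<iota>\<^sub>XF \<and> F = 0\<close> with \<open>Y\<close> by the Leibniz rule and using
  \<open>\<iota>\<^sub>XF \<and> \<iota>\<^sub>YF = 0\<close> gives \<open>\<iota>\<^sub>Y\<iota>\<^sub>XF \<and> F = 0\<close>; contracting once more with \<open>Z\<close> gives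
  \<open>\<iota>\<^sub>Z\<iota>\<^sub>Y\<iota>\<^sub>XF \<and> F = -A(X, Y, Z)\<close> with \<open>A(X, Y, Z) = \<iota>\<^sub>Y\<iota>\<^sub>XF \<and> \<iota>\<^sub>ZF\<close>.
  \<open>A\<close> is antisymmetric in \<open>X, Y\<close> and, by contracting \<open>\<iota>\<^sub>XF \<and> \<iota>\<^sub>ZF = 0\<close> with \<open>Y\<close> and graded
  commutativity, symmetric in \<open>X, Z\<close>; hence \<open>A = 0\<close>. The identities \<open>\<iota>\<^sub>Z\<iota>\<^sub>Y\<iota>\<^sub>XF \<and> F = 0\<close>
  are the Pluecker relations of \<open>F\<close>: if \<open>s = F(a, b, c, d) \<noteq> 0\<close>, they give
  \<open>F = s\<^sup>-\<^sup>3 \<theta>\<^sub>1 \<and> \<theta>\<^sub>2 \<and> \<theta>\<^sub>3 \<and> \<theta>\<^sub>4\<close> with \<open>\<theta>\<^sub>1 = F(-, b, c, d)\<close>, \<open>\<theta>\<^sub>2 = F(a, -, c, d)\<close>,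
  \<open>\<theta>\<^sub>3 = F(a, b, -, d)\<close>, \<open>\<theta>\<^sub>4 = F(a, b, c, -)\<close>.\<close>

section \<open>Alternating multilinear forms\<close>

lemma pform_cong: "is_pform p F \<Longrightarrow> (\<And>i. i < p \<Longrightarrow> v i = w i) \<Longrightarrow> F v = F w"
  unfolding is_pform_def by blast

lemma pform_linear: "is_pform p F \<Longrightarrow> i < p \<Longrightarrow> linear (\<lambda>x. F (v(i := x)))"
  unfolding is_pform_def by blast

lemma pform_repeated_eq_0:
  "is_pform p F \<Longrightarrow> i < p \<Longrightarrow> j < p \<Longrightarrow> i \<noteq> j \<Longrightarrow> v i = v j \<Longrightarrow> F v = 0"
  unfolding is_pform_def by blast

lemma pform_add: "is_pform p F \<Longrightarrow> i < p \<Longrightarrow> F (v(i := x + y)) = F (v(i := x)) + F (v(i := y))"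
  using pform_linear[of p F i v] by (simp add: linear_iff)

lemma pform_transpose:
  assumes F: "is_pform p F" and ij: "i < p" "j < p" "i \<noteq> j"
  shows "F (\<lambda>k. v (Transposition.transpose i j k)) = - F v"
proof -
  let ?g = "\<lambda>x y. F (v(i := x, j := y))"
  have add_left: "?g (x + y) z = ?g x z + ?g y z" for x y z
  proof -
    have "v(i := u, j := z) = (v(j := z))(i := u)" for u
      using ij by (auto simp: fun_eq_iff)
    then show ?thesis using pform_add[OF F ij(1), of "v(j := z)" x y] by simp
  qed
  have add_right: "?g z (x + y) = ?g z x + ?g z y" for x y z
    using pform_add[OF F ij(2), of "v(i := z)" x y] by simp
  have diag: "?g x x = 0" for x
    by (rule pform_repeated_eq_0[OF F ij]) (use ij in auto)
  have "0 = ?g (v i + v j) (v i + v j)"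
    using diag by simp
  also have "\<dots> = ?g (v i) (v j) + ?g (v j) (v i)"
    unfolding add_left add_right using diag[of "v i"] diag[of "v j"] by simp
  also have "?g (v i) (v j) = F v"
    by simp
  also have "v(i := v j, j := v i) = (\<lambda>k. v (Transposition.transpose i j k))"
    using ij by (auto simp: fun_eq_iff Transposition.transpose_def)
  finally show ?thesis by simp
qed

lemma contract_pform:
  assumes F: "is_pform (Suc p) F"
  shows "is_pform p (contract X F)"
  unfolding is_pform_def contract_def
proof (intro conjI allI impI)
  fix v w :: "nat \<Rightarrow> 'a" assume "\<forall>i<p. v i = w i"
  then show "F (\<lambda>i. if i = 0 then X else v (i - 1)) = F (\<lambda>i. if i = 0 then X else w (i - 1))"
    by (intro pform_cong[OF F]) auto
next
  fix i v assume "i < p"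
  moreover have "(\<lambda>k. if k = 0 then X else (v(i := x)) (k - 1)) =
      (\<lambda>k. if k = 0 then X else v (k - 1))(Suc i := x)" for x
    by (auto simp: fun_eq_iff)
  ultimately show "linear (\<lambda>x. F (\<lambda>k. if k = 0 then X else (v(i := x)) (k - 1)))"
    using pform_linear[OF F, of "Suc i"] by simp
next
  fix v :: "nat \<Rightarrow> 'a" and i j assume "i < p" "j < p" "i \<noteq> j" "v i = v j"
  then show "F (\<lambda>i. if i = 0 then X else v (i - 1)) = 0"
    by (intro pform_repeated_eq_0[OF F, of "Suc i" "Suc j"]) auto
qed

lemma contract_commute:
  assumes F: "is_pform (Suc (Suc p)) F"
  shows "contract Y (contract X F) = (\<lambda>w. - contract X (contract Y F) w)"
proof
  fix w
  let ?v = "\<lambda>i::nat. if i = 0 then Y else if i - 1 = 0 then X else w (i - 1 - 1)"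
  have "(\<lambda>i. if i = 0 then X else if i - 1 = 0 then Y else w (i - 1 - 1)) =
      (\<lambda>k. ?v (Transposition.transpose 0 1 k))"
    by (auto simp: fun_eq_iff Transposition.transpose_def)
  then show "contract Y (contract X F) w = - contract X (contract Y F) w"
    unfolding contract_def using pform_transpose[OF F, of 0 1 ?v] by simp
qed

lemma one_form_pform: "linear \<theta> \<Longrightarrow> is_pform 1 (one_form \<theta>)"
  unfolding is_pform_def one_form_def by auto

section \<open>The wedge product\<close>

abbreviation perms :: "nat \<Rightarrow> (nat \<Rightarrow> nat) set" where
  "perms n \<equiv> {\<sigma>. \<sigma> permutes {..<n}}"

definition wedge_term ::
  "nat \<Rightarrow> ((nat \<Rightarrow> 'a) \<Rightarrow> real) \<Rightarrow> ((nat \<Rightarrow> 'a) \<Rightarrow> real) \<Rightarrow> (nat \<Rightarrow> 'a) \<Rightarrow> (nat \<Rightarrow> nat) \<Rightarrow> real"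
  where "wedge_term p \<alpha> \<beta> v \<sigma> = real_of_int (sign \<sigma>) * \<alpha> (\<lambda>i. v (\<sigma> i)) * \<beta> (\<lambda>i. v (\<sigma> (i + p)))"

lemma wedge_eq_sum_wedge_term:
  "wedge p q \<alpha> \<beta> v = (\<Sum>\<sigma>\<in>perms (p + q). wedge_term p \<alpha> \<beta> v \<sigma>) / (fact p * fact q)"
  unfolding wedge_def wedge_term_def by simp

lemma wedge_0_0: "wedge 0 0 \<alpha> \<beta> v = \<alpha> v * \<beta> v"
proof -
  have "perms (0 + 0) = {id}" by auto
  then show ?thesis unfolding wedge_eq_sum_wedge_term wedge_term_def by (simp add: id_def)
qed

lemma wedge_uminus_left: "wedge p q (\<lambda>w. - \<alpha> w) \<beta> v = - wedge p q \<alpha> \<beta> v"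
  unfolding wedge_def by (simp add: sum_negf)

lemma sign_compose_transpose:
  assumes "\<sigma> permutes {..<n::nat}" "a \<noteq> b"
  shows "sign (\<sigma> \<circ> Transposition.transpose a b) = - sign \<sigma>"
proof -
  have "permutation \<sigma>" by (rule permutes_imp_permutation[OF _ assms(1)]) simp
  then show ?thesis using assms(2) by (simp add: sign_compose permutation_swap_id sign_swap_id)
qed

lemma wedge_term_transpose_left:
  assumes "is_pform p \<alpha>" "\<sigma> permutes {..<n::nat}" "a < p" "b < p"
  shows "wedge_term p \<alpha> \<beta> v (\<sigma> \<circ> Transposition.transpose a b) = wedge_term p \<alpha> \<beta> v \<sigma>"
proof (cases "a = b")
  case False
  have "\<alpha> (\<lambda>i. v ((\<sigma> \<circ> Transposition.transpose a b) i)) = - \<alpha> (\<lambda>i. v (\<sigma> i))"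
    using pform_transpose[OF assms(1) assms(3,4) False, of "\<lambda>i. v (\<sigma> i)"] by simp
  moreover have "(\<lambda>i. v ((\<sigma> \<circ> Transposition.transpose a b) (i + p))) = (\<lambda>i. v (\<sigma> (i + p)))"
    using assms by (auto simp: Transposition.transpose_def fun_eq_iff)
  ultimately show ?thesis
    unfolding wedge_term_def sign_compose_transpose[OF assms(2) False] by simp
qed simp

lemma wedge_term_transpose_right:
  assumes "is_pform p \<alpha>" "is_pform q \<beta>" "\<sigma> permutes {..<p + q}"
    and "p \<le> a" "p \<le> b" "a < p + q" "b < p + q"
  shows "wedge_term p \<alpha> \<beta> v (\<sigma> \<circ> Transposition.transpose a b) = wedge_term p \<alpha> \<beta> v \<sigma>"
proof (cases "a = b")
  case False
  have "\<alpha> (\<lambda>i. v ((\<sigma> \<circ> Transposition.transpose a b) i)) = \<alpha> (\<lambda>i. v (\<sigma> i))"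
    by (rule pform_cong[OF assms(1)]) (use assms in \<open>auto simp: Transposition.transpose_def\<close>)
  moreover have "(\<lambda>i. v ((\<sigma> \<circ> Transposition.transpose a b) (i + p))) =
      (\<lambda>k. v (\<sigma> (Transposition.transpose (a - p) (b - p) k + p)))"
    using assms by (auto simp: Transposition.transpose_def fun_eq_iff)
  moreover have "\<beta> (\<lambda>k. v (\<sigma> (Transposition.transpose (a - p) (b - p) k + p))) = - \<beta> (\<lambda>i. v (\<sigma> (i + p)))"
    using pform_transpose[OF assms(2), of "a - p" "b - p" "\<lambda>i. v (\<sigma> (i + p))"] assms False by simp
  ultimately show ?thesis
    unfolding wedge_term_def sign_compose_transpose[OF assms(3) False] by simp
qed simp

text \<open>The permutations of \<open>{..<n}\<close> are grouped according to the position \<open>k\<close> that receives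
  the first vector.\<close>

definition perms_fibre :: "nat \<Rightarrow> nat \<Rightarrow> (nat \<Rightarrow> nat) set" where
  "perms_fibre n k = {\<sigma> \<in> perms n. \<sigma> k = 0}"

lemma sum_perms_by_fibre:
  assumes "0 < n"
  shows "(\<Sum>\<sigma>\<in>perms n. f \<sigma>) = (\<Sum>k<n. \<Sum>\<sigma>\<in>perms_fibre n k. f \<sigma>)"
proof -
  have fin: "finite (perms n)" by (simp add: finite_permutations)
  have "(\<Sum>k<n. \<Sum>\<sigma>\<in>perms_fibre n k. f \<sigma>) = (\<Sum>k<n. \<Sum>\<sigma>\<in>perms n. if \<sigma> k = 0 then f \<sigma> else 0)"
    unfolding perms_fibre_def by (rule sum.cong[OF refl], rule sum.inter_filter[OF fin])
  also have "\<dots> = (\<Sum>\<sigma>\<in>perms n. \<Sum>k<n. if \<sigma> k = 0 then f \<sigma> else 0)"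
    by (rule sum.swap)
  also have "\<dots> = (\<Sum>\<sigma>\<in>perms n. f \<sigma>)"
  proof (rule sum.cong[OF refl])
    fix \<sigma> assume "\<sigma> \<in> perms n"
    then have \<sigma>: "\<sigma> permutes {..<n}" by simp
    have "(\<Sum>k<n. if \<sigma> k = 0 then f \<sigma> else 0) = (\<Sum>k<n. if inv \<sigma> 0 = k then f \<sigma> else 0)"
      by (rule sum.cong[OF refl]) (auto simp add: permutes_inv_eq[OF \<sigma>])
    also have "\<dots> = f \<sigma>"
      using permutes_in_image[OF permutes_inv[OF \<sigma>], of 0] assms by simp
    finally show "(\<Sum>k<n. if \<sigma> k = 0 then f \<sigma> else 0) = f \<sigma>" .
  qed
  finally show ?thesis by simp
qed

lemma sum_perms_fibre_transpose:
  assumes "j < n" "k < n"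
  shows "(\<Sum>\<sigma>\<in>perms_fibre n k. f \<sigma>) = (\<Sum>\<sigma>\<in>perms_fibre n j. f (\<sigma> \<circ> Transposition.transpose j k))"
  by (rule sum.reindex_bij_witness[symmetric,
        where i="\<lambda>\<sigma>. \<sigma> \<circ> Transposition.transpose j k" and j="\<lambda>\<sigma>. \<sigma> \<circ> Transposition.transpose j k"])
    (use assms in \<open>auto simp: perms_fibre_def o_assoc[symmetric] intro!: permutes_compose permutes_swap_id\<close>)

definition shift_perm :: "(nat \<Rightarrow> nat) \<Rightarrow> nat \<Rightarrow> nat" where
  "shift_perm \<rho> = (\<lambda>i. if i = 0 then 0 else Suc (\<rho> (i - 1)))"

definition unshift_perm :: "(nat \<Rightarrow> nat) \<Rightarrow> nat \<Rightarrow> nat" where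
  "unshift_perm \<sigma> = (\<lambda>i. \<sigma> (Suc i) - 1)"

lemma shift_perm_permutes:
  assumes "\<rho> permutes {..<m}"
  shows "shift_perm \<rho> permutes {..<Suc m} \<and> sign (shift_perm \<rho>) = sign \<rho>"
  using assms finite_lessThan
proof (induction rule: permutes_induct)
  case id
  have "shift_perm id = id" by (auto simp: shift_perm_def fun_eq_iff)
  then show ?case using permutes_id[of "{..<Suc m}"] by (simp add: id_def)
next
  case (swap a b \<rho>)
  have shift_transpose: "shift_perm (Transposition.transpose a b \<circ> \<rho>) =
      Transposition.transpose (Suc a) (Suc b) \<circ> shift_perm \<rho>"
    by (auto simp: shift_perm_def fun_eq_iff Transposition.transpose_def)
  have "permutation (shift_perm \<rho>)" "permutation \<rho>"
    using swap by (auto intro: permutes_imp_permutation)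
  then have "sign (shift_perm (Transposition.transpose a b \<circ> \<rho>)) = sign (Transposition.transpose a b \<circ> \<rho>)"
    unfolding shift_transpose using swap
    by (simp only: sign_compose permutation_swap_id sign_swap_id) simp
  moreover have "shift_perm (Transposition.transpose a b \<circ> \<rho>) permutes {..<Suc m}"
    unfolding shift_transpose using swap by (intro permutes_compose permutes_swap_id) auto
  ultimately show ?case by blast
qed

lemma unshift_perm_permutes:
  assumes \<sigma>: "\<sigma> permutes {..<Suc m}" "\<sigma> 0 = 0"
  shows "unshift_perm \<sigma> permutes {..<m}"
proof (rule bij_imp_permutes)
  have nz: "\<sigma> (Suc i) \<noteq> 0" for i
  proof
    assume "\<sigma> (Suc i) = 0"
    then have "\<sigma> (Suc i) = \<sigma> 0" using \<sigma>(2) by simp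
    then show False using permutes_inj[OF \<sigma>(1)] by (simp add: inj_eq)
  qed
  have inj: "inj_on (unshift_perm \<sigma>) {..<m}"
  proof
    fix x y assume "x \<in> {..<m}" "y \<in> {..<m}" "unshift_perm \<sigma> x = unshift_perm \<sigma> y"
    then have "\<sigma> (Suc x) = \<sigma> (Suc y)" using nz[of x] nz[of y] by (simp add: unshift_perm_def)
    then show "x = y" using permutes_inj[OF \<sigma>(1)] by (simp add: inj_eq)
  qed
  have "unshift_perm \<sigma> x < m" if "x < m" for x
    using permutes_in_image[OF \<sigma>(1), of "Suc x"] that by (simp add: unshift_perm_def)
  then have "unshift_perm \<sigma> ` {..<m} \<subseteq> {..<m}"
    by auto
  with inj show "bij_betw (unshift_perm \<sigma>) {..<m} {..<m}"
    by (simp add: bij_betw_def endo_inj_surj)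
next
  fix x assume "x \<notin> {..<m}"
  then show "unshift_perm \<sigma> x = x"
    using permutes_not_in[OF \<sigma>(1), of "Suc x"] by (simp add: unshift_perm_def)
qed

lemma sum_perms_fibre_0:
  "(\<Sum>\<sigma>\<in>perms_fibre (Suc m) 0. f \<sigma>) = (\<Sum>\<rho>\<in>perms m. f (shift_perm \<rho>))"
proof (rule sum.reindex_bij_witness[symmetric, where i=unshift_perm and j=shift_perm])
  fix \<rho> assume "\<rho> \<in> perms m"
  then show "unshift_perm (shift_perm \<rho>) = \<rho>" "shift_perm \<rho> \<in> perms_fibre (Suc m) 0"
    using shift_perm_permutes[of \<rho> m] by (auto simp: shift_perm_def unshift_perm_def perms_fibre_def)
next
  fix \<sigma> assume "\<sigma> \<in> perms_fibre (Suc m) 0"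
  then have \<sigma>: "\<sigma> permutes {..<Suc m}" "\<sigma> 0 = 0" by (auto simp: perms_fibre_def)
  have "\<sigma> i \<noteq> 0" if "i \<noteq> 0" for i
    using \<sigma> permutes_inj[OF \<sigma>(1)] that by (metis inj_eq)
  with \<sigma> show "shift_perm (unshift_perm \<sigma>) = \<sigma>"
    by (auto simp: shift_perm_def unshift_perm_def fun_eq_iff)
  show "unshift_perm \<sigma> \<in> perms m" using unshift_perm_permutes[OF \<sigma>] by simp
qed simp

text \<open>The cycle \<open>p \<mapsto> 0 \<mapsto> 1 \<mapsto> \<dots> \<mapsto> p\<close>, moving the first vector to position \<open>p\<close>.\<close>

definition front_cycle :: "nat \<Rightarrow> nat \<Rightarrow> nat" where
  "front_cycle p = (\<lambda>i. if i < p then Suc i else if i = p then 0 else i)"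

lemma front_cycle_Suc: "front_cycle (Suc p) = front_cycle p \<circ> Transposition.transpose p (Suc p)"
  by (auto simp: front_cycle_def fun_eq_iff Transposition.transpose_def)

lemma front_cycle_permutes: "p < n \<Longrightarrow> front_cycle p permutes {..<n}"
proof (induction p)
  case 0
  have "front_cycle 0 = id" by (auto simp: front_cycle_def)
  then show ?case using permutes_id[of "{..<n}"] by (simp add: id_def)
next
  case (Suc p)
  have "Transposition.transpose p (Suc p) permutes {..<n}"
    using Suc by (intro permutes_swap_id) auto
  with Suc show ?case
    unfolding front_cycle_Suc by (intro permutes_compose) simp_all
qed

lemma sign_front_cycle: "sign (front_cycle p) = (-1) ^ p"
proof (induction p)
  case 0
  have "front_cycle 0 = id" by (auto simp: front_cycle_def)
  then show ?case by simp
next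
  case (Suc p)
  have "permutation (front_cycle p)"
    using front_cycle_permutes[of p "Suc p"] by (auto intro: permutes_imp_permutation)
  with Suc show ?case
    unfolding front_cycle_Suc by (simp only: sign_compose permutation_swap_id sign_swap_id) simp
qed

lemma wedge_term_shift_perm:
  assumes "0 < p" "\<rho> permutes {..<m}"
  shows "wedge_term p \<alpha> \<beta> v (shift_perm \<rho>) =
    wedge_term (p - 1) (contract (v 0) \<alpha>) \<beta> (\<lambda>i. v (Suc i)) \<rho>"
proof -
  have "(\<lambda>i. v (shift_perm \<rho> i)) = (\<lambda>i. if i = 0 then v 0 else v (Suc (\<rho> (i - 1))))"
    by (auto simp: shift_perm_def fun_eq_iff)
  moreover have "(\<lambda>i. v (shift_perm \<rho> (i + p))) = (\<lambda>i. v (Suc (\<rho> (i + (p - 1)))))"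
    using assms(1) by (auto simp: shift_perm_def fun_eq_iff)
  ultimately show ?thesis
    using shift_perm_permutes[OF assms(2)] by (simp add: wedge_term_def contract_def)
qed

lemma wedge_term_shift_perm_front_cycle:
  assumes "is_pform p \<alpha>" "\<rho> permutes {..<m}"
  shows "wedge_term p \<alpha> \<beta> v (shift_perm \<rho> \<circ> front_cycle p) =
    (-1) ^ p * wedge_term p \<alpha> (contract (v 0) \<beta>) (\<lambda>i. v (Suc i)) \<rho>"
proof -
  have "permutation (shift_perm \<rho>)" "permutation (front_cycle p)"
    using shift_perm_permutes[OF assms(2)] front_cycle_permutes[of p "Suc p"]
    by (auto intro: permutes_imp_permutation)
  then have sign: "sign (shift_perm \<rho> \<circ> front_cycle p) = sign \<rho> * (-1) ^ p"
    using shift_perm_permutes[OF assms(2)] by (simp add: sign_compose sign_front_cycle)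
  have "\<alpha> (\<lambda>i. v ((shift_perm \<rho> \<circ> front_cycle p) i)) = \<alpha> (\<lambda>i. v (Suc (\<rho> i)))"
    by (rule pform_cong[OF assms(1)]) (simp add: shift_perm_def front_cycle_def)
  moreover have "(\<lambda>i. v ((shift_perm \<rho> \<circ> front_cycle p) (i + p))) =
      (\<lambda>i. if i = 0 then v 0 else v (Suc (\<rho> (i - 1 + p))))"
  proof
    fix i show "v ((shift_perm \<rho> \<circ> front_cycle p) (i + p)) = (if i = 0 then v 0 else v (Suc (\<rho> (i - 1 + p))))"
      by (cases i) (auto simp: shift_perm_def front_cycle_def)
  qed
  ultimately show ?thesis unfolding wedge_term_def contract_def sign by simp
qed

lemma sum_perms_fibre_left:
  assumes "is_pform p \<alpha>" "k < p"
  shows "(\<Sum>\<sigma>\<in>perms_fibre (p + q) k. wedge_term p \<alpha> \<beta> v \<sigma>) =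
    (\<Sum>\<sigma>\<in>perms_fibre (p + q) 0. wedge_term p \<alpha> \<beta> v \<sigma>)"
proof -
  have "(\<Sum>\<sigma>\<in>perms_fibre (p + q) k. wedge_term p \<alpha> \<beta> v \<sigma>) =
      (\<Sum>\<sigma>\<in>perms_fibre (p + q) 0. wedge_term p \<alpha> \<beta> v (\<sigma> \<circ> Transposition.transpose 0 k))"
    using assms by (intro sum_perms_fibre_transpose) auto
  also have "\<dots> = (\<Sum>\<sigma>\<in>perms_fibre (p + q) 0. wedge_term p \<alpha> \<beta> v \<sigma>)"
    using assms by (intro sum.cong refl wedge_term_transpose_left) (auto simp: perms_fibre_def)
  finally show ?thesis .
qed

lemma sum_perms_fibre_right:
  assumes "is_pform p \<alpha>" "is_pform q \<beta>" "p \<le> k" "k < p + q"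
  shows "(\<Sum>\<sigma>\<in>perms_fibre (p + q) k. wedge_term p \<alpha> \<beta> v \<sigma>) =
    (\<Sum>\<sigma>\<in>perms_fibre (p + q) p. wedge_term p \<alpha> \<beta> v \<sigma>)"
proof -
  have "(\<Sum>\<sigma>\<in>perms_fibre (p + q) k. wedge_term p \<alpha> \<beta> v \<sigma>) =
      (\<Sum>\<sigma>\<in>perms_fibre (p + q) p. wedge_term p \<alpha> \<beta> v (\<sigma> \<circ> Transposition.transpose p k))"
    using assms by (intro sum_perms_fibre_transpose) auto
  also have "\<dots> = (\<Sum>\<sigma>\<in>perms_fibre (p + q) p. wedge_term p \<alpha> \<beta> v \<sigma>)"
    using assms by (intro sum.cong refl wedge_term_transpose_right) (auto simp: perms_fibre_def)
  finally show ?thesis .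
qed

lemma sum_perms_fibre_0_wedge_term:
  assumes "0 < p"
  shows "(\<Sum>\<sigma>\<in>perms_fibre (p + q) 0. wedge_term p \<alpha> \<beta> v \<sigma>) =
    fact (p - 1) * fact q * wedge (p - 1) q (contract (v 0) \<alpha>) \<beta> (\<lambda>i. v (Suc i))"
proof -
  have pq: "p + q = Suc (p - 1 + q)" using assms by simp
  show ?thesis
    unfolding pq sum_perms_fibre_0 wedge_eq_sum_wedge_term
    by (simp add: wedge_term_shift_perm[OF assms])
qed

lemma sum_perms_fibre_front_cycle:
  assumes "p < n"
  shows "(\<Sum>\<sigma>\<in>perms_fibre n p. f \<sigma>) = (\<Sum>\<sigma>\<in>perms_fibre n 0. f (\<sigma> \<circ> front_cycle p))"
proof -
  have cp: "front_cycle p permutes {..<n}" using assms by (rule front_cycle_permutes)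
  have inv0: "inv (front_cycle p) 0 = p"
    using permutes_inv_eq[OF cp] by (simp add: front_cycle_def)
  show ?thesis
  proof (rule sum.reindex_bij_witness[symmetric,
        where i="\<lambda>\<sigma>. \<sigma> \<circ> inv (front_cycle p)" and j="\<lambda>\<sigma>. \<sigma> \<circ> front_cycle p"])
    fix \<sigma> assume \<sigma>: "\<sigma> \<in> perms_fibre n 0"
    show "\<sigma> \<circ> front_cycle p \<circ> inv (front_cycle p) = \<sigma>"
      by (simp add: o_assoc[symmetric] permutes_inv_o[OF cp])
    show "\<sigma> \<circ> front_cycle p \<in> perms_fibre n p"
      using \<sigma> permutes_compose[OF cp, of \<sigma>] by (auto simp: perms_fibre_def front_cycle_def)
  next
    fix \<sigma> assume \<sigma>: "\<sigma> \<in> perms_fibre n p"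
    show "\<sigma> \<circ> inv (front_cycle p) \<circ> front_cycle p = \<sigma>"
      by (simp add: o_assoc[symmetric] permutes_inv_o[OF cp])
    show "\<sigma> \<circ> inv (front_cycle p) \<in> perms_fibre n 0"
      using \<sigma> inv0 permutes_compose[OF permutes_inv[OF cp], of \<sigma>] by (auto simp: perms_fibre_def)
  qed simp
qed

lemma sum_perms_fibre_p_wedge_term:
  assumes "is_pform p \<alpha>" "0 < q"
  shows "(\<Sum>\<sigma>\<in>perms_fibre (p + q) p. wedge_term p \<alpha> \<beta> v \<sigma>) =
    (-1) ^ p * (fact p * fact (q - 1) * wedge p (q - 1) \<alpha> (contract (v 0) \<beta>) (\<lambda>i. v (Suc i)))"
proof -
  have pq: "p + q = Suc (p + (q - 1))" using assms by simp
  have "(\<Sum>\<sigma>\<in>perms_fibre (p + q) p. wedge_term p \<alpha> \<beta> v \<sigma>) =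
      (\<Sum>\<sigma>\<in>perms_fibre (p + q) 0. wedge_term p \<alpha> \<beta> v (\<sigma> \<circ> front_cycle p))"
    using assms by (intro sum_perms_fibre_front_cycle) simp
  also have "\<dots> = (\<Sum>\<rho>\<in>perms (p + (q - 1)). wedge_term p \<alpha> \<beta> v (shift_perm \<rho> \<circ> front_cycle p))"
    unfolding pq by (rule sum_perms_fibre_0)
  also have "\<dots> = (-1) ^ p * (\<Sum>\<rho>\<in>perms (p + (q - 1)). wedge_term p \<alpha> (contract (v 0) \<beta>) (\<lambda>i. v (Suc i)) \<rho>)"
    by (simp add: wedge_term_shift_perm_front_cycle[OF assms(1)] sum_distrib_left)
  finally show ?thesis unfolding wedge_eq_sum_wedge_term by simp
qed

text \<open>Expansion of \<open>(\<alpha> \<and> \<beta>)(v\<^sub>0, v\<^sub>1, \<dots>)\<close> along the first vector; in terms of contractions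
  this is the Leibniz rule \<open>\<iota>\<^sub>X(\<alpha> \<and> \<beta>) = \<iota>\<^sub>X\<alpha> \<and> \<beta> + (-1)\<^sup>p \<alpha> \<and> \<iota>\<^sub>X\<beta>\<close>.\<close>

lemma wedge_expand_first:
  assumes \<alpha>: "is_pform p \<alpha>" and \<beta>: "is_pform q \<beta>" and "0 < p + q"
  shows "wedge p q \<alpha> \<beta> v =
     (if p = 0 then 0 else wedge (p - 1) q (contract (v 0) \<alpha>) \<beta> (\<lambda>i. v (Suc i))) +
     (if q = 0 then 0 else (-1) ^ p * wedge p (q - 1) \<alpha> (contract (v 0) \<beta>) (\<lambda>i. v (Suc i)))"
proof -
  define G where "G k = (\<Sum>\<sigma>\<in>perms_fibre (p + q) k. wedge_term p \<alpha> \<beta> v \<sigma>)" for k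
  have "(\<Sum>\<sigma>\<in>perms (p + q). wedge_term p \<alpha> \<beta> v \<sigma>) = (\<Sum>k<p + q. G k)"
    unfolding G_def by (rule sum_perms_by_fibre[OF assms(3)])
  also have "\<dots> = (\<Sum>k<p. G k) + (\<Sum>k\<in>{p..<p + q}. G k)"
    by (simp add: lessThan_atLeast0 sum.atLeastLessThan_concat)
  also have "(\<Sum>k<p. G k) = (\<Sum>k<p. G 0)"
    unfolding G_def by (intro sum.cong refl sum_perms_fibre_left[OF \<alpha>]) simp
  also have "(\<Sum>k\<in>{p..<p + q}. G k) = (\<Sum>k\<in>{p..<p + q}. G p)"
    unfolding G_def by (intro sum.cong refl sum_perms_fibre_right[OF \<alpha> \<beta>]) auto
  finally have W: "wedge p q \<alpha> \<beta> v = (real p * G 0 + real q * G p) / (fact p * fact q)"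
    unfolding wedge_eq_sum_wedge_term by simp
  have left: "real p * G 0 / (fact p * fact q) =
      (if p = 0 then 0 else wedge (p - 1) q (contract (v 0) \<alpha>) \<beta> (\<lambda>i. v (Suc i)))"
  proof (cases "p = 0")
    case False
    have "(fact p :: real) = real p * fact (p - 1)" using False by (simp add: fact_reduce)
    then show ?thesis using False by (simp add: G_def sum_perms_fibre_0_wedge_term)
  qed simp
  have right: "real q * G p / (fact p * fact q) =
      (if q = 0 then 0 else (-1) ^ p * wedge p (q - 1) \<alpha> (contract (v 0) \<beta>) (\<lambda>i. v (Suc i)))"
  proof (cases "q = 0")
    case False
    have "(fact q :: real) = real q * fact (q - 1)" using False by (simp add: fact_reduce)
    moreover have "(fact p :: real) \<noteq> 0" "(fact (q - 1) :: real) \<noteq> 0" "real q \<noteq> 0"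
      using False by auto
    ultimately show ?thesis
      using False by (simp add: G_def sum_perms_fibre_p_wedge_term[OF \<alpha>])
  qed simp
  show ?thesis unfolding W add_divide_distrib left right ..
qed

lemma contract_wedge:
  assumes "is_pform p \<alpha>" "is_pform q \<beta>" "0 < p + q"
  shows "contract X (wedge p q \<alpha> \<beta>) w =
     (if p = 0 then 0 else wedge (p - 1) q (contract X \<alpha>) \<beta> w) +
     (if q = 0 then 0 else (-1) ^ p * wedge p (q - 1) \<alpha> (contract X \<beta>) w)"
proof -
  have "(\<lambda>i. (\<lambda>i. if i = 0 then X else w (i - 1)) (Suc i)) = w" by simp
  then show ?thesis
    using wedge_expand_first[OF assms, of "\<lambda>i. if i = 0 then X else w (i - 1)"]
    unfolding contract_def[of X "wedge p q \<alpha> \<beta>"] by simp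
qed


lemma linear_wedge_term:
  assumes \<alpha>: "is_pform p \<alpha>" and \<beta>: "is_pform q \<beta>" and \<sigma>: "\<sigma> permutes {..<p + q}" and i: "i < p + q"
  shows "linear (\<lambda>x. wedge_term p \<alpha> \<beta> (v(i := x)) \<sigma>)"
proof -
  define k where "k = inv \<sigma> i"
  have k: "k < p + q"
    using permutes_in_image[OF permutes_inv[OF \<sigma>], of i] i by (simp add: k_def)
  have \<sigma>_eq: "\<sigma> j = i \<longleftrightarrow> j = k" for j
    using permutes_inv_eq[OF \<sigma>, of i j] by (auto simp: k_def)
  let ?s = "real_of_int (sign \<sigma>)"
  show ?thesis
  proof (cases "k < p")
    case True
    have "(\<lambda>j. (v(i := x)) (\<sigma> j)) = (\<lambda>j. v (\<sigma> j))(k := x)" for x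
      by (auto simp: fun_eq_iff \<sigma>_eq)
    moreover have "(\<lambda>j. (v(i := x)) (\<sigma> (j + p))) = (\<lambda>j. v (\<sigma> (j + p)))" for x
      using True by (auto simp: fun_eq_iff \<sigma>_eq)
    ultimately have "wedge_term p \<alpha> \<beta> (v(i := x)) \<sigma> =
        (?s * \<beta> (\<lambda>j. v (\<sigma> (j + p)))) * \<alpha> ((\<lambda>j. v (\<sigma> j))(k := x))" for x
      unfolding wedge_term_def by simp
    then show ?thesis
      using linear_compose[OF pform_linear[OF \<alpha> True] linear_times] by (simp add: o_def)
  next
    case False
    have "\<alpha> (\<lambda>j. (v(i := x)) (\<sigma> j)) = \<alpha> (\<lambda>j. v (\<sigma> j))" for x
      by (rule pform_cong[OF \<alpha>]) (use False \<sigma>_eq in auto)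
    moreover have "(\<lambda>j. (v(i := x)) (\<sigma> (j + p))) = (\<lambda>j. v (\<sigma> (j + p)))(k - p := x)" for x
      using False by (auto simp: fun_eq_iff \<sigma>_eq)
    ultimately have "wedge_term p \<alpha> \<beta> (v(i := x)) \<sigma> =
        (?s * \<alpha> (\<lambda>j. v (\<sigma> j))) * \<beta> ((\<lambda>j. v (\<sigma> (j + p)))(k - p := x))" for x
      unfolding wedge_term_def by simp
    moreover have "k - p < q" using False k by simp
    ultimately show ?thesis
      using linear_compose[OF pform_linear[OF \<beta>] linear_times] by (simp add: o_def)
  qed
qed

text \<open>Composing with the transposition of two equal arguments is a sign-reversing involution
  of the permutation group.\<close>

lemma sum_wedge_term_repeated:
  assumes "i < p + q" "j < p + q" "i \<noteq> j" "v i = v j"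
  shows "(\<Sum>\<sigma>\<in>perms (p + q). wedge_term p \<alpha> \<beta> v \<sigma>) = 0"
proof -
  let ?t = "Transposition.transpose i j"
  have t: "?t permutes {..<p + q}" using assms by (intro permutes_swap_id) auto
  have "(\<Sum>\<sigma>\<in>perms (p + q). wedge_term p \<alpha> \<beta> v \<sigma>) = (\<Sum>\<sigma>\<in>perms (p + q). wedge_term p \<alpha> \<beta> v (?t \<circ> \<sigma>))"
    by (rule sum.reindex_bij_witness[where i="\<lambda>\<sigma>. ?t \<circ> \<sigma>" and j="\<lambda>\<sigma>. ?t \<circ> \<sigma>"])
      (auto simp: o_assoc intro: permutes_compose[OF _ t])
  also have "\<dots> = (\<Sum>\<sigma>\<in>perms (p + q). - wedge_term p \<alpha> \<beta> v \<sigma>)"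
  proof (rule sum.cong[OF refl])
    fix \<sigma> assume "\<sigma> \<in> perms (p + q)"
    then have "permutation \<sigma>" by (auto intro: permutes_imp_permutation)
    then have "sign (?t \<circ> \<sigma>) = - sign \<sigma>"
      using assms(3) by (simp add: sign_compose permutation_swap_id sign_swap_id)
    moreover have "v (?t x) = v x" for x
      using assms(4) by (auto simp: Transposition.transpose_def)
    ultimately show "wedge_term p \<alpha> \<beta> v (?t \<circ> \<sigma>) = - wedge_term p \<alpha> \<beta> v \<sigma>"
      by (simp add: wedge_term_def)
  qed
  finally show ?thesis by (simp add: sum_negf)
qed

lemma wedge_pform:
  assumes \<alpha>: "is_pform p \<alpha>" and \<beta>: "is_pform q \<beta>"
  shows "is_pform (p + q) (wedge p q \<alpha> \<beta>)"
  unfolding is_pform_def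
proof (intro conjI allI impI)
  fix v w :: "nat \<Rightarrow> 'a" assume vw: "\<forall>i<p + q. v i = w i"
  have "wedge_term p \<alpha> \<beta> v \<sigma> = wedge_term p \<alpha> \<beta> w \<sigma>" if "\<sigma> permutes {..<p + q}" for \<sigma>
  proof -
    have "\<alpha> (\<lambda>i. v (\<sigma> i)) = \<alpha> (\<lambda>i. w (\<sigma> i))" "\<beta> (\<lambda>i. v (\<sigma> (i + p))) = \<beta> (\<lambda>i. w (\<sigma> (i + p)))"
      using vw permutes_in_image[OF that] by (auto intro!: pform_cong[OF \<alpha>] pform_cong[OF \<beta>])
    then show ?thesis by (simp add: wedge_term_def)
  qed
  then show "wedge p q \<alpha> \<beta> v = wedge p q \<alpha> \<beta> w"
    unfolding wedge_eq_sum_wedge_term by simp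
next
  fix i and v :: "nat \<Rightarrow> 'a" assume "i < p + q"
  then have "linear (\<lambda>x. \<Sum>\<sigma>\<in>perms (p + q). wedge_term p \<alpha> \<beta> (v(i := x)) \<sigma>)"
    by (intro linear_compose_sum ballI linear_wedge_term[OF \<alpha> \<beta>]) auto
  from linear_compose[OF this bounded_linear.linear[OF bounded_linear_divide]]
  show "linear (\<lambda>x. wedge p q \<alpha> \<beta> (v(i := x)))"
    unfolding wedge_eq_sum_wedge_term by (simp add: o_def)
next
  fix v :: "nat \<Rightarrow> 'a" and i j assume "i < p + q" "j < p + q" "i \<noteq> j" "v i = v j"
  then show "wedge p q \<alpha> \<beta> v = 0"
    unfolding wedge_eq_sum_wedge_term by (simp add: sum_wedge_term_repeated)
qed

lemma wedge_commute:
  assumes "is_pform p \<alpha>" "is_pform q \<beta>"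
  shows "wedge q p \<beta> \<alpha> v = (-1) ^ (p * q) * wedge p q \<alpha> \<beta> v"
  using assms
proof (induction "p + q" arbitrary: p q \<alpha> \<beta> v)
  case 0
  then show ?case by (simp add: wedge_0_0)
next
  case (Suc n)
  let ?v = "\<lambda>i. v (Suc i)"
  have left: "(if p = 0 then 0 else (-1) ^ q * wedge q (p - 1) \<beta> (contract (v 0) \<alpha>) ?v) =
      (-1) ^ (p * q) * (if p = 0 then 0 else wedge (p - 1) q (contract (v 0) \<alpha>) \<beta> ?v)"
  proof (cases "p = 0")
    case False
    have "is_pform (p - 1) (contract (v 0) \<alpha>)"
      using Suc.prems(1) False by (intro contract_pform) simp
    moreover have "n = (p - 1) + q" using Suc.hyps(2) False by simp
    ultimately have "wedge q (p - 1) \<beta> (contract (v 0) \<alpha>) ?v =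
        (-1) ^ ((p - 1) * q) * wedge (p - 1) q (contract (v 0) \<alpha>) \<beta> ?v"
      using Suc.hyps(1) Suc.prems(2) by blast
    moreover have "q + (p - 1) * q = p * q" using False by (cases p) simp_all
    then have "(-1) ^ q * (-1) ^ ((p - 1) * q) = ((-1) ^ (p * q) :: real)"
      by (simp flip: power_add)
    ultimately show ?thesis using False by (simp flip: mult.assoc)
  qed simp
  have right: "(if q = 0 then 0 else wedge (q - 1) p (contract (v 0) \<beta>) \<alpha> ?v) =
      (-1) ^ (p * q) * (if q = 0 then 0 else (-1) ^ p * wedge p (q - 1) \<alpha> (contract (v 0) \<beta>) ?v)"
  proof (cases "q = 0")
    case False
    have "is_pform (q - 1) (contract (v 0) \<beta>)"
      using Suc.prems(2) False by (intro contract_pform) simp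
    moreover have "n = p + (q - 1)" using Suc.hyps(2) False by simp
    ultimately have "wedge (q - 1) p (contract (v 0) \<beta>) \<alpha> ?v =
        (-1) ^ (p * (q - 1)) * wedge p (q - 1) \<alpha> (contract (v 0) \<beta>) ?v"
      using Suc.hyps(1) Suc.prems(1) by blast
    moreover have "p * q = p * (q - 1) + p" using False by (cases q) simp_all
    then have "(-1) ^ (p * q) * (-1) ^ p = ((-1) ^ (p * (q - 1)) :: real)"
      by (simp add: power_add mult.assoc)
    ultimately show ?thesis using False by (simp flip: mult.assoc)
  qed simp
  have pos: "0 < q + p" "0 < p + q" using Suc.hyps(2) by linarith+
  show ?case
    unfolding wedge_expand_first[OF Suc.prems(2,1) pos(1)] wedge_expand_first[OF Suc.prems pos(2)]
    unfolding left right by (simp add: distrib_left)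
qed


section \<open>Pluecker relations and decomposability of 4-forms\<close>

definition app4 :: "((nat \<Rightarrow> 'a) \<Rightarrow> real) \<Rightarrow> 'a \<Rightarrow> 'a \<Rightarrow> 'a \<Rightarrow> 'a \<Rightarrow> real" where
  "app4 F a b c d = F (\<lambda>i. if i = 0 then a else if i = 1 then b else if i = 2 then c else d)"

lemma pform4_eq_app4: "is_pform 4 F \<Longrightarrow> F u = app4 F (u 0) (u 1) (u 2) (u 3)"
  unfolding app4_def by (erule pform_cong) (auto simp: numeral_eq_Suc less_Suc_eq)

lemma app4_antisym:
  assumes F: "is_pform 4 F"
  shows "app4 F a b c d = - app4 F b a c d"
    and "app4 F a b c d = - app4 F a c b d"
    and "app4 F a b c d = - app4 F a b d c"
proof -
  let ?V = "\<lambda>i::nat. if i = 0 then a else if i = 1 then b else if i = 2 then c else d"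
  have "app4 F b a c d = F (\<lambda>k. ?V (Transposition.transpose 0 1 k))"
    and "app4 F a c b d = F (\<lambda>k. ?V (Transposition.transpose 1 2 k))"
    and "app4 F a b d c = F (\<lambda>k. ?V (Transposition.transpose 2 3 k))"
    unfolding app4_def
    by (auto intro!: pform_cong[OF F] simp: Transposition.transpose_def numeral_eq_Suc less_Suc_eq)
  moreover have "app4 F a b c d = F ?V" by (simp add: app4_def)
  ultimately show "app4 F a b c d = - app4 F b a c d"
    and "app4 F a b c d = - app4 F a c b d"
    and "app4 F a b c d = - app4 F a b d c"
    using pform_transpose[OF F, of 0 1 ?V] pform_transpose[OF F, of 1 2 ?V]
      pform_transpose[OF F, of 2 3 ?V] by simp_all
qed

lemma app4_repeated:
  assumes F: "is_pform 4 F"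
  shows "app4 F a a c d = 0" and "app4 F a b c a = 0" and "app4 F a b c b = 0"
  using pform_repeated_eq_0[OF F, of 0 1] pform_repeated_eq_0[OF F, of 0 3]
    pform_repeated_eq_0[OF F, of 1 3]
  unfolding app4_def by simp_all

lemma linear_app4:
  assumes F: "is_pform 4 F"
  shows "linear (\<lambda>x. app4 F x b c d)" and "linear (\<lambda>x. app4 F a x c d)"
    and "linear (\<lambda>x. app4 F a b x d)" and "linear (\<lambda>x. app4 F a b c x)"
proof -
  let ?V = "\<lambda>i::nat. if i = 0 then a else if i = 1 then b else if i = 2 then c else d"
  have "app4 F x b c d = F (?V(0 := x))" and "app4 F a x c d = F (?V(1 := x))"
    and "app4 F a b x d = F (?V(2 := x))" and "app4 F a b c x = F (?V(3 := x))" for x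
    unfolding app4_def by (auto intro!: pform_cong[OF F] simp: numeral_eq_Suc less_Suc_eq)
  then show "linear (\<lambda>x. app4 F x b c d)" and "linear (\<lambda>x. app4 F a x c d)"
    and "linear (\<lambda>x. app4 F a b x d)" and "linear (\<lambda>x. app4 F a b c x)"
    using pform_linear[OF F, of _ ?V] by simp_all
qed

lemma plucker_relation:
  assumes F: "is_pform 4 F"
    and P: "wedge 1 4 (contract Z (contract Y (contract X F))) F = (\<lambda>_. 0)"
  shows "app4 F X Y Z a0 * app4 F a1 a2 a3 a4 - app4 F X Y Z a1 * app4 F a0 a2 a3 a4
       + app4 F X Y Z a2 * app4 F a0 a1 a3 a4 - app4 F X Y Z a3 * app4 F a0 a1 a2 a4
       + app4 F X Y Z a4 * app4 F a0 a1 a2 a3 = 0"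
proof -
  let ?u = "\<lambda>i. if i = 0 then a0 else if i = 1 then a1 else if i = 2 then a2 else if i = 3 then a3 else a4"
  have "wedge 1 4 (contract Z (contract Y (contract X F))) F ?u = 0" using P by simp
  then show ?thesis
    using F by (simp add: numeral_eq_Suc wedge_expand_first wedge_0_0 contract_pform,
        simp add: contract_def pform4_eq_app4[OF F] algebra_simps)
qed


context
  fixes F :: "(nat \<Rightarrow> 'a::euclidean_space) \<Rightarrow> real"
  assumes F: "is_pform 4 F"
    and plucker: "\<And>X Y Z. wedge 1 4 (contract Z (contract Y (contract X F))) F = (\<lambda>_. 0)"
begin

lemma plucker_exchange_2:
  "app4 F a b c d * app4 F a b y z = app4 F a b y d * app4 F a b c z - app4 F a b z d * app4 F a b c y"
proof -
  have "app4 F a b d x = - app4 F a b x d" for x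
    using app4_antisym(3)[OF F, of a b x d] by simp
  moreover have "app4 F c a b x = app4 F a b c x" for x
    using app4_antisym(1)[OF F, of c a b x] app4_antisym(2)[OF F, of a c b x] by simp
  moreover have "app4 F a b d a = 0" "app4 F a b d b = 0"
    using app4_repeated(2,3)[OF F] by simp_all
  ultimately show ?thesis
    using plucker_relation[OF F plucker, of a b d c a b y z] by (simp add: algebra_simps)
qed

lemma plucker_exchange_3:
  "app4 F a b c d * app4 F a y1 y2 y3 =
     app4 F a y1 c d * app4 F a b y2 y3 - app4 F a y2 c d * app4 F a b y1 y3 + app4 F a y3 c d * app4 F a b y1 y2"
proof -
  have "app4 F a c d y = app4 F a y c d" for y
    using app4_antisym(3)[OF F, of a c d y] app4_antisym(2)[OF F, of a c y d] by simp
  moreover have "app4 F b a y z = - app4 F a b y z" for y z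
    using app4_antisym(1)[OF F, of b a y z] by simp
  moreover have "app4 F a c d a = 0" "app4 F a a c d = 0"
    using app4_repeated[OF F] by simp_all
  ultimately show ?thesis
    using plucker_relation[OF F plucker, of a c d b a y1 y2 y3] by (simp add: algebra_simps)
qed

lemma plucker_exchange_4:
  "app4 F a b c d * app4 F x0 x1 x2 x3 =
     app4 F x0 b c d * app4 F a x1 x2 x3 - app4 F x1 b c d * app4 F a x0 x2 x3
     + app4 F x2 b c d * app4 F a x0 x1 x3 - app4 F x3 b c d * app4 F a x0 x1 x2"
proof -
  have "app4 F b c d x = - app4 F x b c d" for x
    using app4_antisym(3)[OF F, of b c d x] app4_antisym(2)[OF F, of b c x d]
      app4_antisym(1)[OF F, of b x c d] by simp
  then show ?thesis
    using plucker_relation[OF F plucker, of b c d a x0 x1 x2 x3] by (simp add: algebra_simps)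
qed

text \<open>Applying the exchange relations to \<open>F(x\<^sub>0, x\<^sub>1, x\<^sub>2, x\<^sub>3)\<close> leaves only values of the four
  forms obtained by freeing one slot of \<open>s = F(a, b, c, d)\<close>, and the result is \<open>s\<^sup>-\<^sup>3\<close> times
  their determinant.\<close>

lemma pform4_eq_wedge_one_forms:
  assumes s: "app4 F a b c d \<noteq> 0"
  shows "F = wedge 3 1 (wedge 2 1 (wedge 1 1
               (one_form (\<lambda>x. inverse (app4 F a b c d) ^ 3 * app4 F x b c d))
               (one_form (\<lambda>x. app4 F a x c d)))
               (one_form (\<lambda>x. app4 F a b x d)))
             (one_form (\<lambda>x. app4 F a b c x))"
    (is "F = wedge 3 1 (wedge 2 1 (wedge 1 1 (one_form ?\<theta>1) (one_form ?\<theta>2)) (one_form ?\<theta>3)) (one_form ?\<theta>4)")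
proof
  fix v :: "nat \<Rightarrow> 'a"
  let ?s = "app4 F a b c d"
  have lin: "linear ?\<theta>1" "linear ?\<theta>2" "linear ?\<theta>3" "linear ?\<theta>4"
    using linear_app4[OF F] linear_compose[OF linear_app4(1)[OF F] linear_times] by (simp_all add: o_def)
  have one_forms: "is_pform 1 (one_form ?\<theta>1)" "is_pform 1 (one_form ?\<theta>2)"
    "is_pform 1 (one_form ?\<theta>3)" "is_pform 1 (one_form ?\<theta>4)"
    using lin by (blast intro: one_form_pform)+
  have exch2: "app4 F a b y z = (app4 F a b y d * app4 F a b c z - app4 F a b z d * app4 F a b c y) * inverse ?s"
    for y z
    using plucker_exchange_2[of a b c d y z] s by (simp add: field_simps)
  have exch3: "app4 F a y1 y2 y3 = (app4 F a y1 c d * app4 F a b y2 y3 - app4 F a y2 c d * app4 F a b y1 y3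
      + app4 F a y3 c d * app4 F a b y1 y2) * inverse ?s" for y1 y2 y3
    using plucker_exchange_3[of a b c d y1 y2 y3] s by (simp add: field_simps)
  have exch4: "app4 F x0 x1 x2 x3 = (app4 F x0 b c d * app4 F a x1 x2 x3 - app4 F x1 b c d * app4 F a x0 x2 x3
      + app4 F x2 b c d * app4 F a x0 x1 x3 - app4 F x3 b c d * app4 F a x0 x1 x2) * inverse ?s"
    for x0 x1 x2 x3
    using plucker_exchange_4[of a b c d x0 x1 x2 x3] s by (simp add: field_simps)
  let ?x0 = "v 0" and ?x1 = "v (Suc 0)" and ?x2 = "v (Suc (Suc 0))" and ?x3 = "v (Suc (Suc (Suc 0)))"
  have Fv: "F v = app4 F ?x0 ?x1 ?x2 ?x3"
    using pform4_eq_app4[OF F, of v] by (simp add: numeral_eq_Suc)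
  show "F v = wedge 3 1 (wedge 2 1 (wedge 1 1 (one_form ?\<theta>1) (one_form ?\<theta>2)) (one_form ?\<theta>3))
      (one_form ?\<theta>4) v"
    unfolding Fv exch4[of ?x0 ?x1 ?x2 ?x3]
      exch3[of ?x1 ?x2 ?x3] exch3[of ?x0 ?x2 ?x3] exch3[of ?x0 ?x1 ?x3] exch3[of ?x0 ?x1 ?x2]
      exch2[of ?x0 ?x1] exch2[of ?x0 ?x2] exch2[of ?x0 ?x3] exch2[of ?x1 ?x2] exch2[of ?x1 ?x3]
      exch2[of ?x2 ?x3]
    using one_forms wedge_pform[OF one_forms(1,2)] wedge_pform[OF wedge_pform[OF one_forms(1,2)] one_forms(3)]
    by (simp add: numeral_eq_Suc wedge_expand_first wedge_0_0 contract_pform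
        contract_def[THEN fun_cong] one_form_def[THEN fun_cong])
      algebra
qed

lemma pform4_decomposable:
  "\<exists>\<theta>1 \<theta>2 \<theta>3 \<theta>4. linear \<theta>1 \<and> linear \<theta>2 \<and> linear \<theta>3 \<and> linear \<theta>4 \<and>
     F = wedge 3 1 (wedge 2 1 (wedge 1 1 (one_form \<theta>1) (one_form \<theta>2)) (one_form \<theta>3)) (one_form \<theta>4)"
proof (cases "\<exists>w. F w \<noteq> 0")
  case True
  then obtain a b c d where s: "app4 F a b c d \<noteq> 0"
    using pform4_eq_app4[OF F] by metis
  have "linear (\<lambda>x. inverse (app4 F a b c d) ^ 3 * app4 F x b c d)"
    using linear_compose[OF linear_app4(1)[OF F] linear_times] by (simp add: o_def)
  then show ?thesis
    using pform4_eq_wedge_one_forms[OF s] linear_app4(2-4)[OF F] by blast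
next
  case False
  let ?z = "\<lambda>_::'a. 0::real"
  have "F = wedge 3 1 (wedge 2 1 (wedge 1 1 (one_form ?z) (one_form ?z)) (one_form ?z)) (one_form ?z)"
    using False by (auto simp: wedge_def one_form_def)
  then show ?thesis
    using linear_zero by blast
qed

end

section \<open>Deriving the Pluecker relations\<close>

context
  fixes F :: "(nat \<Rightarrow> 'a::euclidean_space) \<Rightarrow> real"
  assumes F: "is_pform 4 F"
    and contract_wedge_self: "\<And>X. wedge 3 4 (contract X F) F = (\<lambda>_. 0)"
    and contract_wedge_contract: "\<And>X Y. wedge 3 3 (contract X F) (contract Y F) = (\<lambda>_. 0)"
begin

lemma contract2_wedge_eq_0: "wedge 2 4 (contract Y (contract X F)) F w = 0"
proof -
  have F3: "is_pform 3 (contract X F)" using F by (simp add: contract_pform)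
  have "contract Y (wedge 3 4 (contract X F) F) w =
      wedge 2 4 (contract Y (contract X F)) F w - wedge 3 3 (contract X F) (contract Y F) w"
    using contract_wedge[OF F3 F, of Y w] by simp
  then show ?thesis
    using contract_wedge_self[of X] contract_wedge_contract[of X Y] by (simp add: contract_def)
qed

lemma contract3_wedge_eq_0: "wedge 1 4 (contract Z (contract Y (contract X F))) F = (\<lambda>_. 0)"
proof (rule ext)
  fix w
  have F3: "is_pform 3 (contract X F)" for X using F by (simp add: contract_pform)
  have F2: "is_pform 2 (contract Y (contract X F))" for X Y using F by (simp add: contract_pform)
  define A where "A X Y Z = wedge 2 3 (contract Y (contract X F)) (contract Z F) w" for X Y Z
  have "contract Z (wedge 2 4 (contract Y (contract X F)) F) w =
      wedge 1 4 (contract Z (contract Y (contract X F))) F w + A X Y Z"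
    using contract_wedge[OF F2[where X=X and Y=Y] F, of Z w] by (simp add: A_def)
  then have C: "wedge 1 4 (contract Z (contract Y (contract X F))) F w = - A X Y Z"
    using contract2_wedge_eq_0 by (simp add: contract_def)
  have symm: "A X Y Z = A Z Y X" for X Y Z
  proof -
    have "contract Y (wedge 3 3 (contract X F) (contract Z F)) w =
        A X Y Z - wedge 3 2 (contract X F) (contract Y (contract Z F)) w"
      using contract_wedge[OF F3[of X] F3[of Z], of Y w] by (simp add: A_def)
    moreover have "wedge 3 2 (contract X F) (contract Y (contract Z F)) w = A Z Y X"
      using wedge_commute[OF F2[where X=Z and Y=Y] F3[of X]] by (simp add: A_def)
    ultimately show ?thesis
      using contract_wedge_contract[of X Z] by (simp add: contract_def)
  qed
  have antisymm: "A X Y Z = - A Y X Z" for X Y Z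
    using contract_commute[of 2 F X Y] F by (simp add: A_def wedge_uminus_left)
  have "A X Y Z = 0"
    using symm[of X Y Z] antisymm[of Z Y X] symm[of Y Z X] antisymm[of X Z Y] symm[of Z X Y]
      antisymm[of Y X Z] by linarith
  with C show "wedge 1 4 (contract Z (contract Y (contract X F))) F w = 0" by simp
qed

end

theorem mainTheorem6:
  fixes F :: "(nat \<Rightarrow> 'a::euclidean_space) \<Rightarrow> real"
  assumes "is_pform 4 F"
    and "\<forall>X. wedge 3 4 (contract X F) F = (\<lambda>_. 0)"
    and "\<forall>X Y. wedge 3 3 (contract X F) (contract Y F) = (\<lambda>_. 0)"
  shows "(\<forall>X Y Z. wedge 1 4 (contract Z (contract Y (contract X F))) F = (\<lambda>_. 0)) \<and>
         (\<exists>\<theta>1 \<theta>2 \<theta>3 \<theta>4. linear \<theta>1 \<and> linear \<theta>2 \<and> linear \<theta>3 \<and> linear \<theta>4 \<and>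
            F = wedge 3 1 (wedge 2 1 (wedge 1 1 (one_form \<theta>1) (one_form \<theta>2)) (one_form \<theta>3))
                  (one_form \<theta>4))"
proof -
  have plucker: "wedge 1 4 (contract Z (contract Y (contract X F))) F = (\<lambda>_. 0)" for X Y Z
    using contract3_wedge_eq_0[OF assms(1) assms(2)[rule_format] assms(3)[rule_format]] .
  then show ?thesis
    using pform4_decomposable[OF assms(1) plucker] by blast
qed

end
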